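(* Let $\Omega>0$, $\lambda>1/\pi$ with $\lambda\neq2\Omega$, and let $w^\lambda$ be a maximizer of $\mathcal{E}$ over $K_\lambda(D)$ with associated number $\mu^\lambda$ such that $w^\lambda=\lambda I_{A^\lambda}+2\Omega I_{B^\lambda}$ a.e., where $A^\lambda=\{x\in D:Gw^\lambda(x)+\frac{\Omega}{2}|x|^2>\mu^\lambda\}$, $B^\lambda=\{x\in D:Gw^\lambda(x)+\frac{\Omega}{2}|x|^2=\mu^\lambda\}$, and $\mu^\lambda=\operatorname{ess\,sup}_{\{w^\lambda<\lambda\}}(Gw^\lambda+\frac{\Omega}{2}|x|^2)$. Then $|B^\lambda|=0$.
   Context: $D$ is the open unit disk in $\mathbb{R}^2$; $G$ is the Green's function of $-\Delta$ in $D$ with zero Dirichlet boundary condition and $Gw(x)=\int_D G(x,y)w(y)dy$. $I_A$ is the indicator of $A$ and $|\cdot|$ is Lebesgue measure. $K_\lambda(D)=\{w\in L^\infty(D):0\le w\le\lambda\text{ a.e.},\ \int_D w=1\}$, $\mathcal{E}(w)=\frac12\int_D\int_D G(x,y)w(x)w(y)dxdy+\frac{\Omega}{2}\int_D|x|^2w(x)dx$; a maximizer is $w^\lambda\in K_\lambda(D)$ with $\mathcal{E}(w^\lambda)=\sup_{K_\lambda(D)}\mathcal{E}$. *)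

theory Defs
  imports "HOL-Analysis.Analysis" "HOL-Probability.Essential_Supremum"
begin

type_synonym pt = "real ^ 2"

definition Disk :: "pt set" where
  "Disk = ball 0 1"

text \<open>Green's function of -Laplacian on the unit disk, zero Dirichlet data:
  G(x,y) = (1/(4 pi)) ln((1 - 2 x.y + |x|^2 |y|^2) / |x - y|^2),
  equivalently -(1/2pi) ln|x-y| + (1/2pi) ln(|y| |x - y/|y|^2|).\<close>
definition GreenD :: "pt \<Rightarrow> pt \<Rightarrow> real" where
  "GreenD x y = (1 / (4 * pi)) *
     ln ((1 - 2 * (x \<bullet> y) + (norm x)\<^sup>2 * (norm y)\<^sup>2) / (norm (x - y))\<^sup>2)"

definition Gop :: "(pt \<Rightarrow> real) \<Rightarrow> pt \<Rightarrow> real" where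
  "Gop w x = (\<integral>y\<in>Disk. GreenD x y * w y \<partial>lebesgue)"

definition Klam :: "real \<Rightarrow> (pt \<Rightarrow> real) set" where
  "Klam lam = {w. w \<in> borel_measurable lebesgue \<and>
     (AE x in lebesgue. x \<in> Disk \<longrightarrow> 0 \<le> w x \<and> w x \<le> lam) \<and>
     set_integrable lebesgue Disk w \<and> (\<integral>x\<in>Disk. w x \<partial>lebesgue) = 1}"

definition Energy :: "real \<Rightarrow> (pt \<Rightarrow> real) \<Rightarrow> real" where
  "Energy Om w = (1/2) * (\<integral>x\<in>Disk. (\<integral>y\<in>Disk. GreenD x y * w x * w y \<partial>lebesgue) \<partial>lebesgue)
      + (Om / 2) * (\<integral>x\<in>Disk. (norm x)\<^sup>2 * w x \<partial>lebesgue)"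

end

theory Submission
  imports Defs
begin

text \<open>
  On \<open>B\<close> the a.e. representation of \<open>w\<close> forces \<open>w = 2\<Omega>\<close>, because \<open>A\<close> and \<open>B\<close> are disjoint.
  So it suffices that every level set \<open>{w = c}\<close>, \<open>0 < c \<noteq> \<lambda>\<close>, of a maximizer is null.
  For \<open>c > \<lambda>\<close> this is the constraint \<open>w \<le> \<lambda>\<close>. For \<open>0 < c < \<lambda>\<close> suppose the level set has
  positive measure. It contains two pieces \<open>S\<close>, \<open>T\<close> of positive measure, inside a disk of
  radius \<open>\<rho> < 1\<close>, of diameter at most \<open>2\<kappa>d\<close> and at distance more than \<open>d\<close> from each other,
  where \<open>\<kappa> = (1 - \<rho>\<^sup>2)/8\<close>. The dipole \<open>v = 1\<^sub>S/|S| - 1\<^sub>T/|T|\<close> has mean zero and lives where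
  \<open>0 < w < \<lambda>\<close>, so \<open>w \<plusminus> t v\<close> is admissible for small \<open>t > 0\<close>. As the energy is a quadratic
  plus a linear functional, \<open>E(w + t v) + E(w - t v) = 2 E(w) + t\<^sup>2 \<integral>\<integral> G v v\<close>. The logarithmic
  singularity of \<open>G\<close> gives \<open>G \<ge> ln (16/d\<^sup>2) / (4\<pi>)\<close> inside each piece and \<open>G \<le> ln (4/d\<^sup>2) / (4\<pi>)\<close>
  across them, so the last term is positive, contradicting maximality.
\<close>

lemma ident_borel_measurable_lebesgue [measurable]:
  "(\<lambda>x. x) \<in> borel_measurable (lebesgue :: 'a::euclidean_space measure)"
  using id_borel_measurable_lebesgue by (simp add: id_def)

lemma sigma_finite_lebesgue: "sigma_finite_measure (lebesgue :: pt measure)"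
  unfolding sigma_finite_measure_def
proof (intro exI[of _ "range (\<lambda>n::nat. cball 0 (real n))"] conjI)
  have "\<exists>n::nat. x \<in> cball 0 (real n)" for x :: pt
    using real_arch_simple[of "norm x"] by auto
  then show "\<Union>(range (\<lambda>n::nat. cball (0::pt) (real n))) = space lebesgue" by auto
qed (auto simp: emeasure_cball)

interpretation lebesgue_pt: sigma_finite_measure "lebesgue :: pt measure"
  by (rule sigma_finite_lebesgue)

lemma Disk_lmeasurable [measurable]: "Disk \<in> lmeasurable"
  by (simp add: Disk_def)

lemma cball_in_sets_lebesgue [measurable]: "cball (x::pt) r \<in> sets lebesgue"
  using lmeasurable_cball fmeasurableD by blast

lemma emeasure_cball_pt: "0 \<le> r \<Longrightarrow> emeasure lebesgue (cball (x::pt) r) = ennreal (pi * r\<^sup>2)"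
  using emeasure_cball[of r x] by (simp add: unit_ball_vol_2)

lemma emeasure_Disk_finite: "S \<subseteq> Disk \<Longrightarrow> emeasure lebesgue S < \<infinity>"
  using Disk_lmeasurable emeasure_mono[of S Disk lebesgue]
  by (auto simp: fmeasurable_def intro: le_less_trans)

lemma integrable_indicator_subset_Disk:
  "S \<in> sets lebesgue \<Longrightarrow> S \<subseteq> Disk \<Longrightarrow> integrable lebesgue (indicat_real S)"
  using emeasure_Disk_finite[of S] by (simp add: integrable_real_indicator)

lemma integrable_indicator_Disk [simp]: "integrable lebesgue (indicat_real Disk)"
  by (simp add: integrable_indicator_subset_Disk)

lemma measure_pos_if_not_null:
  assumes "S \<in> fmeasurable M" "S \<notin> null_sets M"
  shows "0 < measure M S"
proof -
  have "emeasure M S \<noteq> 0" using assms by (auto simp: null_sets_def fmeasurableD)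
  then show ?thesis using emeasure_eq_measure2[OF assms(1)] by (simp add: zero_less_measure_iff)
qed

section \<open>Estimates for the Green function\<close>

lemma green_numerator_eq:
  fixes x y :: "'a::real_inner"
  shows "1 - 2 * (x \<bullet> y) + (norm x)\<^sup>2 * (norm y)\<^sup>2
       = (norm (x - y))\<^sup>2 + (1 - (norm x)\<^sup>2) * (1 - (norm y)\<^sup>2)"
  by (simp add: power2_norm_eq_inner inner_diff algebra_simps inner_commute)

lemma green_numerator_le_4:
  fixes x y :: "'a::real_inner"
  assumes "norm x < 1" "norm y < 1"
  shows "1 - 2 * (x \<bullet> y) + (norm x)\<^sup>2 * (norm y)\<^sup>2 \<le> 4"
proof -
  have "- (x \<bullet> y) \<le> norm x * norm y"
    using Cauchy_Schwarz_ineq2[of x y] by (simp add: abs_le_iff)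
  moreover have "norm x * norm y \<le> 1" using assms by (simp add: mult_le_one)
  moreover have "(norm x)\<^sup>2 * (norm y)\<^sup>2 \<le> 1"
    using assms by (simp add: abs_square_le_1 mult_le_one)
  ultimately show ?thesis by linarith
qed

lemma GreenD_diag [simp]: "GreenD x x = 0"
  by (simp add: GreenD_def)

lemma GreenD_nonneg:
  assumes "norm x < 1" "norm y < 1"
  shows "0 \<le> GreenD x y"
proof (cases "x = y")
  case False
  have "0 \<le> (1 - (norm x)\<^sup>2) * (1 - (norm y)\<^sup>2)"
    using assms by (intro mult_nonneg_nonneg) (simp_all add: abs_square_le_1)
  then have "(norm (x - y))\<^sup>2 \<le> 1 - 2 * (x \<bullet> y) + (norm x)\<^sup>2 * (norm y)\<^sup>2"
    unfolding green_numerator_eq by linarith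
  then show ?thesis
    using False by (simp add: GreenD_def le_divide_eq)
qed simp

lemma GreenD_le_ln:
  assumes "norm x < 1" "norm y < 1" "0 < d" "d \<le> norm (x - y)"
  shows "GreenD x y \<le> 1 / (4 * pi) * ln (4 / d\<^sup>2)"
proof -
  have "0 < norm (x - y)" using assms(3,4) by linarith
  then have pos: "0 < (norm (x - y))\<^sup>2" by simp
  have "0 \<le> (1 - (norm x)\<^sup>2) * (1 - (norm y)\<^sup>2)"
    using assms by (intro mult_nonneg_nonneg) (simp_all add: abs_square_le_1)
  then have num: "0 < 1 - 2 * (x \<bullet> y) + (norm x)\<^sup>2 * (norm y)\<^sup>2"
    using pos unfolding green_numerator_eq by linarith
  moreover have "d\<^sup>2 \<le> (norm (x - y))\<^sup>2" using assms by (intro power_mono) auto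
  ultimately have "(1 - 2 * (x \<bullet> y) + (norm x)\<^sup>2 * (norm y)\<^sup>2) / (norm (x - y))\<^sup>2 \<le> 4 / d\<^sup>2"
    using green_numerator_le_4[OF assms(1,2)] assms(3) by (intro frac_le) auto
  with num pos have "ln ((1 - 2 * (x \<bullet> y) + (norm x)\<^sup>2 * (norm y)\<^sup>2) / (norm (x - y))\<^sup>2)
      \<le> ln (4 / d\<^sup>2)"
    by (intro ln_mono) auto
  then show ?thesis
    unfolding GreenD_def by (simp add: divide_right_mono)
qed

lemma GreenD_ge_ln:
  assumes "norm x \<le> \<rho>" "norm y \<le> \<rho>" "\<rho> < 1" "x \<noteq> y" "norm (x - y) \<le> d"
  shows "1 / (4 * pi) * ln ((1 - \<rho>\<^sup>2)\<^sup>2 / d\<^sup>2) \<le> GreenD x y"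
proof -
  have "0 < norm (x - y)" using assms(4) by simp
  then have pos: "0 < (norm (x - y))\<^sup>2" and "0 < d" using assms(5) by (simp, linarith)
  have "0 \<le> \<rho>" using assms(1) norm_ge_zero order_trans by blast
  then have sq: "(norm x)\<^sup>2 \<le> \<rho>\<^sup>2" "(norm y)\<^sup>2 \<le> \<rho>\<^sup>2" "\<rho>\<^sup>2 < 1"
    using assms by (simp_all add: power_mono abs_square_less_1)
  have "(1 - \<rho>\<^sup>2)\<^sup>2 \<le> (1 - (norm x)\<^sup>2) * (1 - (norm y)\<^sup>2)"
    unfolding power2_eq_square[of "1 - \<rho>\<^sup>2"] using sq by (intro mult_mono) auto
  then have num: "(1 - \<rho>\<^sup>2)\<^sup>2 \<le> 1 - 2 * (x \<bullet> y) + (norm x)\<^sup>2 * (norm y)\<^sup>2"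
    unfolding green_numerator_eq using pos by linarith
  have "(norm (x - y))\<^sup>2 \<le> d\<^sup>2" using assms by (intro power_mono) auto
  then have "(1 - \<rho>\<^sup>2)\<^sup>2 / d\<^sup>2 \<le> (1 - 2 * (x \<bullet> y) + (norm x)\<^sup>2 * (norm y)\<^sup>2) / (norm (x - y))\<^sup>2"
    using order_trans[OF zero_le_power2 num] num pos by (intro frac_le) auto
  moreover have "0 < (1 - \<rho>\<^sup>2)\<^sup>2 / d\<^sup>2" using sq(3) \<open>0 < d\<close> by simp
  ultimately show ?thesis
    unfolding GreenD_def by (simp add: divide_right_mono)
qed

lemma GreenD_measurable [measurable]:
  "(\<lambda>p. GreenD (fst p) (snd p)) \<in> borel_measurable (lebesgue \<Otimes>\<^sub>M lebesgue)"
proof -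
  have "(\<lambda>p. p) \<in> (lebesgue \<Otimes>\<^sub>M lebesgue) \<rightarrow>\<^sub>M (borel \<Otimes>\<^sub>M (borel :: pt measure))"
    by (rule measurable_pair_measureI)
       (auto intro: measurable_completion simp: space_pair_measure)
  moreover have "(\<lambda>p. GreenD (fst p) (snd p)) \<in> borel_measurable (borel \<Otimes>\<^sub>M borel)"
    unfolding GreenD_def by measurable
  ultimately show ?thesis
    by (rule measurable_comp[where f = "\<lambda>p. p", unfolded o_def])
qed

lemma GreenD_measurable_snd [measurable]: "GreenD x \<in> borel_measurable lebesgue"
  using measurable_Pair2[OF GreenD_measurable, of x] by simp

lemma exists_dyadic_scale:
  fixes r :: real
  assumes "0 < r" "r \<le> 2"
  obtains k where "2 ^ k \<le> 2 / r" "2 / r < 2 ^ Suc k"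
proof -
  have ex: "\<exists>n. 2 / r < (2::real) ^ n" by (rule real_arch_pow) simp
  define n where "n = (LEAST n. 2 / r < (2::real) ^ n)"
  have n: "2 / r < 2 ^ n" unfolding n_def by (rule LeastI_ex[OF ex])
  have "n \<noteq> 0"
  proof
    assume "n = 0" with n have "2 / r < 1" by simp
    with assms show False by (simp add: divide_less_eq)
  qed
  then obtain k where k: "n = Suc k" by (cases n) auto
  have "2 ^ k \<le> 2 / r"
  proof (rule ccontr)
    assume "\<not> 2 ^ k \<le> 2 / r"
    then have "n \<le> k" unfolding n_def by (intro Least_le) simp
    with k show False by simp
  qed
  with n k show ?thesis using that by blast
qed

lemma ln_four_div_le_dyadic_sum:
  assumes r: "0 < r" "r \<le> 2" and c: "0 \<le> c"
  shows "ennreal (c * ln (4 / r\<^sup>2)) \<le> (\<Sum>j. ennreal (c * ln 4) * indicator {..2 / 2^j} r)"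
proof -
  obtain k where k1: "2 ^ k \<le> 2 / r" and n1: "2 / r < 2 ^ Suc k"
    using exists_dyadic_scale[OF r] .
  have "ln (4 / r\<^sup>2) = ln ((2 / r) ^ 2)" by (simp add: power_divide)
  also have "\<dots> = 2 * ln (2 / r)" using r by (subst ln_realpow) auto
  also have "\<dots> \<le> 2 * ln (2 ^ Suc k)" using n1 r by (simp add: less_imp_le)
  also have "\<dots> = real (Suc k) * ln 4"
  proof -
    have "ln (4::real) = 2 * ln 2" using ln_realpow[of 2 2] by simp
    then show ?thesis by (simp only: ln_realpow[of 2, simplified])
  qed
  finally have L: "c * ln (4 / r\<^sup>2) \<le> c * (real (Suc k) * ln 4)"
    using c by (simp add: mult_left_mono)
  have "(\<Sum>j<Suc k. ennreal (c * ln 4) * indicator {..2 / 2^j} r) = (\<Sum>j<Suc k. ennreal (c * ln 4))"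
  proof (rule sum.cong)
    fix j assume "j \<in> {..<Suc k}"
    then have "(2::real) ^ j \<le> 2 ^ k" by (intro power_increasing) auto
    then have "2 ^ j \<le> 2 / r" using k1 by linarith
    then have "r \<le> 2 / 2 ^ j" using r by (simp add: field_simps)
    then show "ennreal (c * ln 4) * indicator {..2 / 2^j} r = ennreal (c * ln 4)" by simp
  qed simp
  also have "\<dots> = ennreal (c * (real (Suc k) * ln 4))"
    using c by (simp add: ennreal_of_nat_eq_real_of_nat[symmetric] ennreal_mult' mult.commute mult.left_commute)
  moreover have "(\<Sum>j<Suc k. ennreal (c * ln 4) * indicator {..2 / 2^j} r)
      \<le> (\<Sum>j. ennreal (c * ln 4) * indicator {..2 / 2^j} r)"
    by (rule sum_le_suminf) auto
  ultimately have "ennreal (c * (real (Suc k) * ln 4))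
      \<le> (\<Sum>j. ennreal (c * ln 4) * indicator {..2 / 2^j} r)"
    by simp
  with ennreal_leI[OF L] show ?thesis by (rule order_trans)
qed

lemma GreenD_le_dyadic_sum:
  assumes x: "norm x < 1"
  shows "ennreal (indicator Disk y * GreenD x y)
    \<le> (\<Sum>j. ennreal (ln 4 / (4 * pi)) * indicator (cball x (2 / 2^j)) y)"
proof (cases "y \<in> Disk \<and> y \<noteq> x")
  case True
  then have y: "norm y < 1" by (auto simp: Disk_def)
  have r: "0 < norm (x - y)" "norm (x - y) \<le> 2"
    using True x y norm_triangle_ineq4[of x y] by auto
  have "ennreal (indicator Disk y * GreenD x y) \<le> ennreal (1 / (4 * pi) * ln (4 / (norm (x - y))\<^sup>2))"
    using True GreenD_le_ln[OF x y r(1) order_refl] by (intro ennreal_leI) simp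
  also have "\<dots> \<le> (\<Sum>j. ennreal (1 / (4 * pi) * ln 4) * indicator {..2 / 2^j} (norm (x - y)))"
    by (rule ln_four_div_le_dyadic_sum[OF r]) simp
  also have "\<dots> = (\<Sum>j. ennreal (ln 4 / (4 * pi)) * indicator (cball x (2 / 2^j)) y)"
    by (simp add: indicator_def dist_norm)
  finally show ?thesis .
qed (auto simp: indicator_def)

text \<open>Integrating the dyadic bound turns the logarithmic singularity into a geometric series.\<close>
lemma GreenD_nn_integral_le:
  assumes x: "norm x < 1"
  shows "(\<integral>\<^sup>+y. ennreal (indicator Disk y * GreenD x y) \<partial>lebesgue) \<le> ennreal (4 * ln 4 / 3)"
proof -
  define c where "c = ln 4 / (4 * pi)"
  have c0: "0 \<le> c" by (simp add: c_def)
  have "(\<integral>\<^sup>+y. ennreal (indicator Disk y * GreenD x y) \<partial>lebesgue)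
      \<le> (\<integral>\<^sup>+y. (\<Sum>j. ennreal c * indicator (cball x (2 / 2^j)) y) \<partial>lebesgue)"
    unfolding c_def by (intro nn_integral_mono GreenD_le_dyadic_sum[OF x])
  also have "\<dots> = (\<Sum>j. (\<integral>\<^sup>+y. ennreal c * indicator (cball x (2 / 2^j)) y \<partial>lebesgue))"
    by (rule nn_integral_suminf) simp
  also have "\<dots> = (\<Sum>j. ennreal (ln 4 * (1/4)^j))"
  proof (rule suminf_cong)
    fix j :: nat
    have "(\<integral>\<^sup>+y. ennreal c * indicator (cball x (2 / 2^j)) y \<partial>lebesgue)
        = ennreal c * emeasure lebesgue (cball x (2 / 2^j))"
      by (rule nn_integral_cmult_indicator) simp
    also have "\<dots> = ennreal c * ennreal (pi * (2 / 2^j)\<^sup>2)"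
      by (subst emeasure_cball_pt) auto
    also have "\<dots> = ennreal (ln 4 * (1/4)^j)"
      using c0 by (simp add: ennreal_mult[symmetric] c_def power_divide field_simps
          power_mult_distrib[symmetric] flip: power_mult)
        (metis mult.commute power_mult num_double numeral_times_numeral power2_eq_square)
    finally show "(\<integral>\<^sup>+y. ennreal c * indicator (cball x (2 / 2^j)) y \<partial>lebesgue)
        = ennreal (ln 4 * (1/4)^j)" .
  qed
  also have "\<dots> = ennreal (\<Sum>j. ln 4 * (1/4)^j)"
    by (rule suminf_ennreal2) (auto intro: summable_mult)
  also have "(\<Sum>j. ln 4 * (1/4::real)^j) = 4 * ln 4 / 3"
    by (simp add: suminf_mult suminf_geometric)
  finally show ?thesis .
qed

lemma GreenD_nonneg_on_Disk:
  "norm x < 1 \<Longrightarrow> 0 \<le> indicator Disk y * GreenD x y"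
  using GreenD_nonneg by (auto simp: indicator_def Disk_def)

lemma GreenD_integrable:
  assumes "norm x < 1"
  shows "integrable lebesgue (\<lambda>y. indicator Disk y * GreenD x y)"
proof (rule integrableI_nonneg)
  show "(\<integral>\<^sup>+y. ennreal (indicator Disk y * GreenD x y) \<partial>lebesgue) < \<infinity>"
    using GreenD_nn_integral_le[OF assms] by (simp add: le_less_trans)
qed (use GreenD_nonneg_on_Disk[OF assms] in auto)

lemma GreenD_integral_le:
  assumes "norm x < 1"
  shows "(\<integral>y. indicator Disk y * GreenD x y \<partial>lebesgue) \<le> 4 * ln 4 / 3"
proof -
  have "(\<integral>y. indicator Disk y * GreenD x y \<partial>lebesgue)
      = enn2real (\<integral>\<^sup>+y. ennreal (indicator Disk y * GreenD x y) \<partial>lebesgue)"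
    using GreenD_nonneg_on_Disk[OF assms] by (intro integral_eq_nn_integral) auto
  also have "\<dots> \<le> 4 * ln 4 / 3"
    using enn2real_mono[OF GreenD_nn_integral_le[OF assms]] by simp
  finally show ?thesis .
qed

section \<open>The energy as a quadratic form\<close>

definition green_inner :: "(pt \<Rightarrow> real) \<Rightarrow> pt \<Rightarrow> real" where
  "green_inner u x = (\<integral>y. indicator Disk y * (GreenD x y * u x * u y) \<partial>lebesgue)"

definition green_quad :: "(pt \<Rightarrow> real) \<Rightarrow> real" where
  "green_quad u = (\<integral>x. indicator Disk x * green_inner u x \<partial>lebesgue)"

definition second_moment :: "(pt \<Rightarrow> real) \<Rightarrow> real" where
  "second_moment u = (\<integral>x. indicator Disk x * ((norm x)\<^sup>2 * u x) \<partial>lebesgue)"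

lemma Energy_eq: "Energy Om u = green_quad u / 2 + Om / 2 * second_moment u"
  unfolding Energy_def green_quad_def green_inner_def second_moment_def set_lebesgue_integral_def
  by simp

context
  fixes u :: "pt \<Rightarrow> real" and M :: real
  assumes u_measurable [measurable]: "u \<in> borel_measurable lebesgue"
    and M_nonneg: "0 \<le> M"
    and u_bounded: "AE y in lebesgue. y \<in> Disk \<longrightarrow> \<bar>u y\<bar> \<le> M"
begin

lemma green_inner_integrand_bound:
  assumes "norm x < 1"
  shows "AE y in lebesgue. \<bar>indicator Disk y * (GreenD x y * u x * u y)\<bar>
      \<le> \<bar>u x\<bar> * M * (indicator Disk y * GreenD x y)"
  using u_bounded
proof eventually_elim
  case (elim y)
  show ?case
  proof (cases "y \<in> Disk")
    case True
    then have G: "0 \<le> GreenD x y" using GreenD_nonneg[OF assms] by (simp add: Disk_def)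
    then have "\<bar>GreenD x y * u x * u y\<bar> \<le> GreenD x y * \<bar>u x\<bar> * M"
      using elim True by (simp add: abs_mult mult_left_mono)
    then show ?thesis using True by (simp add: mult_ac)
  qed simp
qed

lemma green_inner_integrand_integrable:
  assumes "norm x < 1"
  shows "integrable lebesgue (\<lambda>y. indicator Disk y * (GreenD x y * u x * u y))"
proof (rule Bochner_Integration.integrable_bound)
  show "integrable lebesgue (\<lambda>y. \<bar>u x\<bar> * M * (indicator Disk y * GreenD x y))"
    using GreenD_integrable[OF assms] by simp
  show "AE y in lebesgue. norm (indicator Disk y * (GreenD x y * u x * u y))
      \<le> norm (\<bar>u x\<bar> * M * (indicator Disk y * GreenD x y))"
  proof -
    have "norm (\<bar>u x\<bar> * M * (indicator Disk y * GreenD x y)) = \<bar>u x\<bar> * M * (indicator Disk y * GreenD x y)"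
      for y using GreenD_nonneg_on_Disk[OF assms, of y] M_nonneg by simp
    then show ?thesis using green_inner_integrand_bound[OF assms] by simp
  qed
qed measurable

lemma abs_green_inner_le:
  assumes "norm x < 1"
  shows "\<bar>green_inner u x\<bar> \<le> \<bar>u x\<bar> * M * (4 * ln 4 / 3)"
proof -
  have "\<bar>green_inner u x\<bar> \<le> (\<integral>y. \<bar>indicator Disk y * (GreenD x y * u x * u y)\<bar> \<partial>lebesgue)"
    unfolding green_inner_def by (rule integral_abs_bound)
  also have "\<dots> \<le> (\<integral>y. \<bar>u x\<bar> * M * (indicator Disk y * GreenD x y) \<partial>lebesgue)"
    using integrable_abs[OF green_inner_integrand_integrable[OF assms]]
      integrable_mult_right[OF GreenD_integrable[OF assms], of "\<bar>u x\<bar> * M"]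
      green_inner_integrand_bound[OF assms]
    by (rule integral_mono_AE)
  also have "\<dots> = \<bar>u x\<bar> * M * (\<integral>y. indicator Disk y * GreenD x y \<partial>lebesgue)"
    by simp
  also have "\<dots> \<le> \<bar>u x\<bar> * M * (4 * ln 4 / 3)"
    using GreenD_integral_le[OF assms] M_nonneg by (intro mult_left_mono) simp_all
  finally show ?thesis .
qed

lemma green_inner_measurable: "green_inner u \<in> borel_measurable lebesgue"
  unfolding green_inner_def by measurable

lemma green_quad_integrand_integrable:
  "integrable lebesgue (\<lambda>x. indicator Disk x * green_inner u x)"
proof (rule Bochner_Integration.integrable_bound)
  show "integrable lebesgue (\<lambda>x. indicator Disk x * (M * M * (4 * ln 4 / 3)))" by simp
  show "(\<lambda>x. indicator Disk x * green_inner u x) \<in> borel_measurable lebesgue"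
    using green_inner_measurable by measurable
  show "AE x in lebesgue. norm (indicator Disk x * green_inner u x)
      \<le> norm (indicator Disk x * (M * M * (4 * ln 4 / 3)))"
    using u_bounded
  proof eventually_elim
    case (elim x)
    show ?case
    proof (cases "x \<in> Disk")
      case True
      then have "\<bar>green_inner u x\<bar> \<le> \<bar>u x\<bar> * M * (4 * ln 4 / 3)"
        using abs_green_inner_le by (simp add: Disk_def)
      also have "\<dots> \<le> M * M * (4 * ln 4 / 3)"
        using elim True M_nonneg by (intro mult_right_mono) auto
      finally show ?thesis using True M_nonneg by simp
    qed simp
  qed
qed

lemma second_moment_integrand_integrable:
  "integrable lebesgue (\<lambda>x. indicator Disk x * ((norm x)\<^sup>2 * u x))"
proof (rule Bochner_Integration.integrable_bound)
  show "integrable lebesgue (\<lambda>x. indicator Disk x * M)" by simp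
  show "AE x in lebesgue. norm (indicator Disk x * ((norm x)\<^sup>2 * u x)) \<le> norm (indicator Disk x * M)"
    using u_bounded
  proof eventually_elim
    case (elim x)
    show ?case
    proof (cases "x \<in> Disk")
      case True
      then have "(norm x)\<^sup>2 \<le> 1" by (simp add: Disk_def abs_square_le_1)
      then have "\<bar>(norm x)\<^sup>2 * u x\<bar> \<le> 1 * M"
        unfolding abs_mult using elim True by (intro mult_mono) auto
      then show ?thesis using True by simp
    qed simp
  qed
qed measurable

end

context
  fixes w v :: "pt \<Rightarrow> real" and Mw Mv t :: real
  assumes w_measurable [measurable]: "w \<in> borel_measurable lebesgue"
    and v_measurable [measurable]: "v \<in> borel_measurable lebesgue"
    and Mw_nonneg: "0 \<le> Mw" and Mv_nonneg: "0 \<le> Mv"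
    and w_bounded: "AE y in lebesgue. y \<in> Disk \<longrightarrow> \<bar>w y\<bar> \<le> Mw"
    and v_bounded: "AE y in lebesgue. y \<in> Disk \<longrightarrow> \<bar>v y\<bar> \<le> Mv"
begin

lemma perturbation_bounded:
  "AE y in lebesgue. y \<in> Disk \<longrightarrow> \<bar>w y + c * v y\<bar> \<le> Mw + \<bar>c\<bar> * Mv"
  using w_bounded v_bounded
proof eventually_elim
  case (elim y)
  have "\<bar>w y + c * v y\<bar> \<le> \<bar>w y\<bar> + \<bar>c\<bar> * \<bar>v y\<bar>"
    by (metis abs_mult abs_triangle_ineq)
  also have "\<dots> \<le> Mw + \<bar>c\<bar> * Mv" if "y \<in> Disk"
    using elim that by (intro add_mono mult_left_mono) auto
  finally show ?case by blast
qed

lemma perturbations_measurable_bounded: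
  defines "M \<equiv> Mw + \<bar>t\<bar> * Mv"
  shows "(\<lambda>y. w y + t * v y) \<in> borel_measurable lebesgue"
    and "(\<lambda>y. w y - t * v y) \<in> borel_measurable lebesgue"
    and "0 \<le> M"
    and "AE y in lebesgue. y \<in> Disk \<longrightarrow> \<bar>w y + t * v y\<bar> \<le> M"
    and "AE y in lebesgue. y \<in> Disk \<longrightarrow> \<bar>w y - t * v y\<bar> \<le> M"
  using perturbation_bounded[of t] perturbation_bounded[of "- t"] Mw_nonneg Mv_nonneg
  by (simp_all add: M_def)

lemma green_quad_parallelogram:
  "green_quad (\<lambda>x. w x + t * v x) + green_quad (\<lambda>x. w x - t * v x)
     = 2 * green_quad w + 2 * t\<^sup>2 * green_quad v"
proof -
  note pm = perturbations_measurable_bounded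
  note integrable_inner =
    green_inner_integrand_integrable[OF pm(1,3,4)] green_inner_integrand_integrable[OF pm(2,3,5)]
    green_inner_integrand_integrable[OF w_measurable Mw_nonneg w_bounded]
    green_inner_integrand_integrable[OF v_measurable Mv_nonneg v_bounded]
  note integrable_outer =
    green_quad_integrand_integrable[OF pm(1,3,4)] green_quad_integrand_integrable[OF pm(2,3,5)]
    green_quad_integrand_integrable[OF w_measurable Mw_nonneg w_bounded]
    green_quad_integrand_integrable[OF v_measurable Mv_nonneg v_bounded]
  have inner: "green_inner (\<lambda>x. w x + t * v x) x + green_inner (\<lambda>x. w x - t * v x) x
      = 2 * green_inner w x + 2 * t\<^sup>2 * green_inner v x" if x: "norm x < 1" for x
  proof -
    have "green_inner (\<lambda>x. w x + t * v x) x + green_inner (\<lambda>x. w x - t * v x) x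
      = (\<integral>y. 2 * (indicator Disk y * (GreenD x y * w x * w y))
            + 2 * t\<^sup>2 * (indicator Disk y * (GreenD x y * v x * v y)) \<partial>lebesgue)"
      unfolding green_inner_def
      by (subst Bochner_Integration.integral_add[symmetric, OF integrable_inner(1,2)[OF x]])
         (simp add: algebra_simps power2_eq_square)
    also have "\<dots> = 2 * green_inner w x + 2 * t\<^sup>2 * green_inner v x"
      unfolding green_inner_def using integrable_inner(3,4)[OF x] by simp
    finally show ?thesis .
  qed
  have "green_quad (\<lambda>x. w x + t * v x) + green_quad (\<lambda>x. w x - t * v x)
      = (\<integral>x. 2 * (indicator Disk x * green_inner w x)
            + 2 * t\<^sup>2 * (indicator Disk x * green_inner v x) \<partial>lebesgue)"
  proof -
    have "indicator Disk x * green_inner (\<lambda>x. w x + t * v x) x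
        + indicator Disk x * green_inner (\<lambda>x. w x - t * v x) x
        = 2 * (indicator Disk x * green_inner w x) + 2 * t\<^sup>2 * (indicator Disk x * green_inner v x)"
      for x by (cases "x \<in> Disk") (simp_all add: Disk_def inner flip: distrib_left)
    then show ?thesis unfolding green_quad_def
      by (subst Bochner_Integration.integral_add[symmetric, OF integrable_outer(1,2)]) simp
  qed
  also have "\<dots> = 2 * green_quad w + 2 * t\<^sup>2 * green_quad v"
    unfolding green_quad_def using integrable_outer(3,4) by simp
  finally show ?thesis .
qed

lemma second_moment_parallelogram:
  "second_moment (\<lambda>x. w x + t * v x) + second_moment (\<lambda>x. w x - t * v x) = 2 * second_moment w"
proof -
  note pm = perturbations_measurable_bounded
  have "second_moment (\<lambda>x. w x + t * v x) + second_moment (\<lambda>x. w x - t * v x)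
      = (\<integral>x. 2 * (indicator Disk x * ((norm x)\<^sup>2 * w x)) \<partial>lebesgue)"
    unfolding second_moment_def
    by (subst Bochner_Integration.integral_add[symmetric,
          OF second_moment_integrand_integrable[OF pm(1,3,4)]
             second_moment_integrand_integrable[OF pm(2,3,5)]])
       (simp add: algebra_simps)
  also have "\<dots> = 2 * second_moment w"
    unfolding second_moment_def by simp
  finally show ?thesis .
qed

lemma Energy_parallelogram:
  "Energy Om (\<lambda>x. w x + t * v x) + Energy Om (\<lambda>x. w x - t * v x)
     = 2 * Energy Om w + t\<^sup>2 * green_quad v"
proof -
  have "Energy Om (\<lambda>x. w x + t * v x) + Energy Om (\<lambda>x. w x - t * v x)
      = (green_quad (\<lambda>x. w x + t * v x) + green_quad (\<lambda>x. w x - t * v x)) / 2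
        + Om / 2 * (second_moment (\<lambda>x. w x + t * v x) + second_moment (\<lambda>x. w x - t * v x))"
    by (simp add: Energy_eq algebra_simps)
  also have "\<dots> = 2 * Energy Om w + t\<^sup>2 * green_quad v"
    unfolding green_quad_parallelogram second_moment_parallelogram
    by (simp add: Energy_eq algebra_simps)
  finally show ?thesis .
qed

end

section \<open>Dipoles\<close>

definition dipole :: "pt set \<Rightarrow> pt set \<Rightarrow> pt \<Rightarrow> real" where
  "dipole S T y = indicator S y / measure lebesgue S - indicator T y / measure lebesgue T"

lemma dipole_measurable [measurable]:
  assumes [measurable]: "S \<in> sets lebesgue" "T \<in> sets lebesgue"
  shows "dipole S T \<in> borel_measurable lebesgue"
  unfolding dipole_def by measurable

lemma dipole_swap: "dipole T S = (\<lambda>y. - dipole S T y)"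
  by (simp add: dipole_def fun_eq_iff)

lemma dipole_outside: "y \<notin> S \<Longrightarrow> y \<notin> T \<Longrightarrow> dipole S T y = 0"
  by (simp add: dipole_def)

lemma abs_dipole_le: "\<bar>dipole S T y\<bar> \<le> 1 / measure lebesgue S + 1 / measure lebesgue T"
proof -
  have "\<bar>dipole S T y\<bar> \<le> \<bar>indicator S y / measure lebesgue S\<bar> + \<bar>indicator T y / measure lebesgue T\<bar>"
    unfolding dipole_def by (rule abs_triangle_ineq4)
  also have "\<dots> \<le> 1 / measure lebesgue S + 1 / measure lebesgue T"
    by (intro add_mono) (auto simp: indicator_def)
  finally show ?thesis .
qed

lemma
  assumes "S \<in> sets lebesgue" "T \<in> sets lebesgue" "S \<subseteq> Disk" "T \<subseteq> Disk"
    and "0 < measure lebesgue S" "0 < measure lebesgue T"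
  shows dipole_integrable: "integrable lebesgue (dipole S T)"
    and integral_dipole: "(\<integral>y. dipole S T y \<partial>lebesgue) = 0"
proof -
  have "integrable lebesgue (indicat_real S)" "integrable lebesgue (indicat_real T)"
    using assms by (simp_all add: integrable_indicator_subset_Disk)
  then show "integrable lebesgue (dipole S T)" "(\<integral>y. dipole S T y \<partial>lebesgue) = 0"
    using assms by (simp_all add: dipole_def[abs_def])
qed

lemma
  assumes "S \<in> sets lebesgue" "T \<in> sets lebesgue"
  shows green_inner_dipole_integrand_integrable: "norm x < 1 \<Longrightarrow>
      integrable lebesgue (\<lambda>y. indicator Disk y * (GreenD x y * dipole S T x * dipole S T y))"
    and green_quad_dipole_integrand_integrable:
      "integrable lebesgue (\<lambda>x. indicator Disk x * green_inner (dipole S T) x)"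
proof -
  define M where "M = 1 / measure lebesgue S + 1 / measure lebesgue T"
  have "0 \<le> M" "AE y in lebesgue. y \<in> Disk \<longrightarrow> \<bar>dipole S T y\<bar> \<le> M"
    using abs_dipole_le by (simp_all add: M_def)
  note bounded = dipole_measurable[OF assms] this
  show "norm x < 1 \<Longrightarrow>
      integrable lebesgue (\<lambda>y. indicator Disk y * (GreenD x y * dipole S T x * dipole S T y))"
    by (rule green_inner_integrand_integrable[OF bounded])
  show "integrable lebesgue (\<lambda>x. indicator Disk x * green_inner (dipole S T) x)"
    by (rule green_quad_integrand_integrable[OF bounded])
qed

lemma green_inner_neg: "green_inner (\<lambda>y. - u y) x = green_inner u x"
  by (simp add: green_inner_def)

lemma dipole_integrand_ge:
  fixes S T :: "pt set"
  defines "a \<equiv> 1 / measure lebesgue S" and "b \<equiv> 1 / measure lebesgue T"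
  assumes S: "S \<subseteq> Disk" "0 < measure lebesgue S" and T: "T \<subseteq> Disk" "0 < measure lebesgue T"
    and disjoint: "S \<inter> T = {}" and x: "x \<in> S" and "y \<noteq> x"
    and near: "\<And>y. y \<in> S \<Longrightarrow> y \<noteq> x \<Longrightarrow> L \<le> GreenD x y"
    and far: "\<And>y. y \<in> T \<Longrightarrow> GreenD x y \<le> U"
  shows "a * a * L * indicator S y - a * b * U * indicator T y
      \<le> indicator Disk y * (GreenD x y * dipole S T x * dipole S T y)"
proof -
  have ab: "0 < a" "0 < b" using S T by (simp_all add: a_def b_def)
  have "x \<notin> T" using x disjoint by blast
  then have vx: "dipole S T x = a" using x by (simp add: dipole_def a_def)
  consider "y \<in> S" | "y \<in> T" | "y \<notin> S" "y \<notin> T" by blast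
  then show ?thesis
  proof cases
    case 1
    then have "y \<notin> T" "y \<in> Disk" using disjoint S by auto
    then have "dipole S T y = a" using 1 by (simp add: dipole_def a_def)
    moreover have "a * a * L \<le> a * a * GreenD x y" using near[OF 1 \<open>y \<noteq> x\<close>] ab by simp
    ultimately show ?thesis using 1 \<open>y \<notin> T\<close> \<open>y \<in> Disk\<close> vx by (simp add: mult_ac)
  next
    case 2
    then have "y \<notin> S" "y \<in> Disk" using disjoint T by auto
    then have "dipole S T y = - b" using 2 by (simp add: dipole_def b_def)
    moreover have "a * b * GreenD x y \<le> a * b * U" using far[OF 2] ab by simp
    ultimately show ?thesis using 2 \<open>y \<notin> S\<close> \<open>y \<in> Disk\<close> vx by (simp add: mult_ac)
  qed (simp add: dipole_def)
qed

lemma green_inner_dipole_ge: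
  assumes S: "S \<in> sets lebesgue" "S \<subseteq> Disk" "0 < measure lebesgue S"
    and T: "T \<in> sets lebesgue" "T \<subseteq> Disk" "0 < measure lebesgue T"
    and disjoint: "S \<inter> T = {}" and x: "x \<in> S"
    and near: "\<And>y. y \<in> S \<Longrightarrow> y \<noteq> x \<Longrightarrow> L \<le> GreenD x y"
    and far: "\<And>y. y \<in> T \<Longrightarrow> GreenD x y \<le> U"
  shows "(L - U) / measure lebesgue S \<le> green_inner (dipole S T) x"
proof -
  define a b where "a = 1 / measure lebesgue S" and "b = 1 / measure lebesgue T"
  have iS: "integrable lebesgue (indicat_real S)" and iT: "integrable lebesgue (indicat_real T)"
    using S T by (simp_all add: integrable_indicator_subset_Disk)
  have "(L - U) / measure lebesgue S = (\<integral>y. a * a * L * indicator S y - a * b * U * indicator T y \<partial>lebesgue)"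
    using iS iT S T by (simp add: a_def b_def field_simps)
  also have "\<dots> \<le> green_inner (dipole S T) x"
    unfolding green_inner_def
  proof (rule integral_mono_AE)
    show "integrable lebesgue (\<lambda>y. a * a * L * indicator S y - a * b * U * indicator T y)"
      using iS iT by simp
    have "norm x < 1" using x S by (auto simp: Disk_def)
    with S(1) T(1)
    show "integrable lebesgue (\<lambda>y. indicator Disk y * (GreenD x y * dipole S T x * dipole S T y))"
      by (rule green_inner_dipole_integrand_integrable)
    have "AE y in lebesgue. y \<noteq> x"
      using negligible_sing[of x] negligible_iff_null_sets by (intro AE_I'[of "{x}"]) auto
    then show "AE y in lebesgue. a * a * L * indicator S y - a * b * U * indicator T y
        \<le> indicator Disk y * (GreenD x y * dipole S T x * dipole S T y)"
      unfolding a_def b_def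
      by eventually_elim (rule dipole_integrand_ge[OF S(2,3) T(2,3) disjoint x _ near far])
  qed
  finally show ?thesis .
qed

context
  fixes S T :: "pt set" and L U :: real
  assumes S: "S \<in> sets lebesgue" "S \<subseteq> Disk" "0 < measure lebesgue S"
    and T: "T \<in> sets lebesgue" "T \<subseteq> Disk" "0 < measure lebesgue T"
    and disjoint: "S \<inter> T = {}"
    and near_S: "\<And>x y. x \<in> S \<Longrightarrow> y \<in> S \<Longrightarrow> y \<noteq> x \<Longrightarrow> L \<le> GreenD x y"
    and near_T: "\<And>x y. x \<in> T \<Longrightarrow> y \<in> T \<Longrightarrow> y \<noteq> x \<Longrightarrow> L \<le> GreenD x y"
    and far: "\<And>x y. x \<in> S \<Longrightarrow> y \<in> T \<Longrightarrow> GreenD x y \<le> U \<and> GreenD y x \<le> U"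
begin

lemma green_inner_dipole_ge_indicator:
  "(L - U) / measure lebesgue S * indicator S x + (L - U) / measure lebesgue T * indicator T x
     \<le> indicator Disk x * green_inner (dipole S T) x"
proof -
  consider "x \<in> S" | "x \<in> T" | "x \<notin> S" "x \<notin> T" by blast
  then show ?thesis
  proof cases
    case 1
    have "(L - U) / measure lebesgue S \<le> green_inner (dipole S T) x"
    proof (rule green_inner_dipole_ge[OF S T disjoint 1])
      show "L \<le> GreenD x y" if "y \<in> S" "y \<noteq> x" for y using near_S 1 that by blast
      show "GreenD x y \<le> U" if "y \<in> T" for y using far 1 that by blast
    qed
    moreover have "x \<notin> T" "x \<in> Disk" using 1 disjoint S by auto
    ultimately show ?thesis using 1 by simp
  next
    case 2
    have "(L - U) / measure lebesgue T \<le> green_inner (dipole T S) x"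
    proof (rule green_inner_dipole_ge[OF T S _ 2])
      show "T \<inter> S = {}" using disjoint by blast
      show "L \<le> GreenD x y" if "y \<in> T" "y \<noteq> x" for y using near_T 2 that by blast
      show "GreenD x y \<le> U" if "y \<in> S" for y using far 2 that by blast
    qed
    moreover have "x \<notin> S" "x \<in> Disk" using 2 disjoint T by auto
    ultimately show ?thesis
      using 2 by (simp add: dipole_swap[where S = S and T = T] green_inner_neg)
  qed (simp add: green_inner_def dipole_outside)
qed

lemma green_quad_dipole_pos:
  assumes "U < L"
  shows "0 < green_quad (dipole S T)"
proof -
  have iS: "integrable lebesgue (indicat_real S)" and iT: "integrable lebesgue (indicat_real T)"
    using S T by (simp_all add: integrable_indicator_subset_Disk)
  have "2 * (L - U) = (\<integral>x. (L - U) / measure lebesgue S * indicator S x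
      + (L - U) / measure lebesgue T * indicator T x \<partial>lebesgue)"
    using iS iT S T by simp
  also have "\<dots> \<le> green_quad (dipole S T)"
    unfolding green_quad_def using iS iT green_quad_dipole_integrand_integrable[OF S(1) T(1)]
    by (intro integral_mono green_inner_dipole_ge_indicator) simp_all
  finally show ?thesis using assms by simp
qed

end

section \<open>Separated pieces of a set of positive measure\<close>

lemma not_null_inter_cball:
  fixes P :: "'a::euclidean_space set"
  assumes "bounded P" "P \<notin> null_sets lebesgue" "0 < r"
  obtains p where "P \<inter> cball p r \<notin> null_sets lebesgue"
proof -
  have "compact (closure P)" using assms(1) by (simp add: compact_closure)
  then obtain k where k: "finite k" "closure P \<subseteq> (\<Union>x\<in>k. ball x r)"
    using assms(3) unfolding compact_eq_totally_bounded by blast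
  have cover: "P \<subseteq> (\<Union>x\<in>k. P \<inter> cball x r)"
  proof
    fix y assume "y \<in> P"
    moreover from this obtain x where "x \<in> k" "y \<in> ball x r"
      using k(2) closure_subset by blast
    ultimately show "y \<in> (\<Union>x\<in>k. P \<inter> cball x r)" by (auto intro: less_imp_le)
  qed
  have "\<exists>p. P \<inter> cball p r \<notin> null_sets lebesgue"
  proof (rule ccontr)
    assume "\<nexists>p. P \<inter> cball p r \<notin> null_sets lebesgue"
    then have "(\<Union>x\<in>k. P \<inter> cball x r) \<in> null_sets lebesgue"
      using k(1) by (intro null_sets_UN') (auto intro: countable_finite)
    with cover have "P \<in> null_sets lebesgue" by (rule null_sets_completion_subset)
    with assms(2) show False by contradiction
  qed
  then show ?thesis using that by blast
qed

lemma not_null_inter_inner_cball: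
  assumes "W \<subseteq> Disk" "W \<notin> null_sets lebesgue"
  obtains \<rho> where "0 \<le> \<rho>" "\<rho> < 1" "W \<inter> cball 0 \<rho> \<notin> null_sets lebesgue"
proof -
  define \<rho> where "\<rho> n = 1 - 1 / real (Suc n)" for n
  have cover: "W \<subseteq> (\<Union>n. W \<inter> cball 0 (\<rho> n))"
  proof
    fix x assume x: "x \<in> W"
    then have "0 < 1 - norm x" using assms(1) by (auto simp: Disk_def)
    then obtain n where "inverse (real (Suc n)) < 1 - norm x"
      using reals_Archimedean by blast
    then have "norm x \<le> \<rho> n" by (simp add: \<rho>_def inverse_eq_divide)
    with x show "x \<in> (\<Union>n. W \<inter> cball 0 (\<rho> n))" by auto
  qed
  have "\<exists>n. W \<inter> cball 0 (\<rho> n) \<notin> null_sets lebesgue"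
  proof (rule ccontr)
    assume "\<nexists>n. W \<inter> cball 0 (\<rho> n) \<notin> null_sets lebesgue"
    then have "(\<Union>n. W \<inter> cball 0 (\<rho> n)) \<in> null_sets lebesgue"
      by (intro null_sets_UN) blast
    with cover have "W \<in> null_sets lebesgue" by (rule null_sets_completion_subset)
    with assms(2) show False by contradiction
  qed
  moreover have "0 \<le> \<rho> n" "\<rho> n < 1" for n by (simp_all add: \<rho>_def field_simps)
  ultimately show ?thesis using that by blast
qed

lemma not_null_diff_cball:
  fixes W :: "pt set"
  assumes "W \<in> sets lebesgue" "0 \<le> R" "pi * R\<^sup>2 < measure lebesgue W"
  shows "W - cball p R \<notin> null_sets lebesgue"
proof
  assume null: "W - cball p R \<in> null_sets lebesgue"
  have "emeasure lebesgue W \<le> emeasure lebesgue ((W - cball p R) \<union> cball p R)"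
    using assms(1) by (intro emeasure_mono) auto
  also have "\<dots> \<le> emeasure lebesgue (W - cball p R) + emeasure lebesgue (cball p R)"
    using null by (intro emeasure_subadditive) auto
  also have "\<dots> = ennreal (pi * R\<^sup>2)"
    using null emeasure_cball_pt[OF assms(2), of p] by auto
  finally have "measure lebesgue W \<le> pi * R\<^sup>2"
    using assms(2) by (simp add: measure_def enn2real_leI)
  with assms(3) show False by simp
qed

lemma dist_le_of_cball: "x \<in> cball p r \<Longrightarrow> y \<in> cball p r \<Longrightarrow> dist x y \<le> 2 * r"
  by (metis dist_commute dist_triangle mem_cball mult_2 add_mono order_trans)

text \<open>The scale \<open>d\<close> is chosen so that a disk of radius \<open>2d\<close> carries at most half the measure
  of \<open>W\<close>; removing the disk of radius \<open>r + d\<close> about the first piece therefore leaves a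
  non-null set, in which the second piece is found.\<close>
lemma exists_separated_pieces:
  fixes W :: "pt set"
  assumes W: "W \<in> sets lebesgue" "bounded W" "W \<notin> null_sets lebesgue"
    and \<kappa>: "0 < \<kappa>" "\<kappa> \<le> 1"
  obtains d S T where "0 < d" "S \<subseteq> W" "T \<subseteq> W" "S \<in> sets lebesgue" "T \<in> sets lebesgue"
    "S \<notin> null_sets lebesgue" "T \<notin> null_sets lebesgue"
    "\<And>x y. x \<in> S \<Longrightarrow> y \<in> S \<Longrightarrow> dist x y \<le> 2 * (\<kappa> * d)"
    "\<And>x y. x \<in> T \<Longrightarrow> y \<in> T \<Longrightarrow> dist x y \<le> 2 * (\<kappa> * d)"
    "\<And>x y. x \<in> S \<Longrightarrow> y \<in> T \<Longrightarrow> d < dist x y"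
proof -
  define m where "m = measure lebesgue W"
  have m: "0 < m"
    unfolding m_def using W by (intro measure_pos_if_not_null bounded_set_imp_lmeasurable)
  define d where "d = sqrt (m / (8 * pi))"
  have d: "0 < d" "d\<^sup>2 = m / (8 * pi)" using m by (simp_all add: d_def)
  define r where "r = \<kappa> * d"
  have r: "0 < r" "r \<le> d" using d \<kappa> by (simp_all add: r_def mult_le_cancel_right1)
  obtain p where p: "W \<inter> cball p r \<notin> null_sets lebesgue"
    using not_null_inter_cball[OF W(2,3) r(1)] by blast
  define W' where "W' = W - cball p (r + d)"
  have "pi * (r + d)\<^sup>2 \<le> pi * (2 * d)\<^sup>2" using r d by (intro mult_left_mono power_mono) auto
  also have "\<dots> < m" using d m by (simp add: power_mult_distrib)
  finally have "W' \<notin> null_sets lebesgue"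
    unfolding W'_def using W(1) r d by (intro not_null_diff_cball) (auto simp: m_def)
  then obtain q where q: "W' \<inter> cball q r \<notin> null_sets lebesgue"
    using not_null_inter_cball[OF _ _ r(1)] bounded_subset[OF W(2)] by (metis Diff_subset W'_def)
  show ?thesis
  proof (rule that[of d "W \<inter> cball p r" "W' \<inter> cball q r"])
    show "d < dist x y" if "x \<in> W \<inter> cball p r" "y \<in> W' \<inter> cball q r" for x y
      using that dist_triangle[of p y x] by (auto simp: W'_def r_def dist_commute)
  qed (use d p q W(1) dist_le_of_cball in \<open>auto simp: W'_def r_def\<close>)
qed

lemma green_quad_dipole_pos_if_separated:
  assumes S: "S \<in> sets lebesgue" "0 < measure lebesgue S"
    and T: "T \<in> sets lebesgue" "0 < measure lebesgue T"
    and \<rho>: "0 \<le> \<rho>" "\<rho> < 1" "S \<union> T \<subseteq> cball 0 \<rho>" and d: "0 < d"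
    and diam_S: "\<And>x y. x \<in> S \<Longrightarrow> y \<in> S \<Longrightarrow> dist x y \<le> (1 - \<rho>\<^sup>2) / 4 * d"
    and diam_T: "\<And>x y. x \<in> T \<Longrightarrow> y \<in> T \<Longrightarrow> dist x y \<le> (1 - \<rho>\<^sup>2) / 4 * d"
    and sep: "\<And>x y. x \<in> S \<Longrightarrow> y \<in> T \<Longrightarrow> d < dist x y"
  shows "0 < green_quad (dipole S T)"
proof -
  have \<rho>2: "\<rho>\<^sup>2 < 1" using \<rho> by (simp add: abs_square_less_1)
  have Disk: "S \<subseteq> Disk" "T \<subseteq> Disk" using \<rho>(2,3) by (auto simp: Disk_def)
  define L where "L = 1 / (4 * pi) * ln ((1 - \<rho>\<^sup>2)\<^sup>2 / ((1 - \<rho>\<^sup>2) / 4 * d)\<^sup>2)"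
  define U where "U = 1 / (4 * pi) * ln (4 / d\<^sup>2)"
  have near: "L \<le> GreenD x y"
    if "x \<in> S \<union> T" "y \<in> S \<union> T" "y \<noteq> x" "dist x y \<le> (1 - \<rho>\<^sup>2) / 4 * d" for x y
    unfolding L_def using that \<rho> by (intro GreenD_ge_ln) (auto simp: dist_norm)
  have far: "GreenD x y \<le> U" if "x \<in> S \<union> T" "y \<in> S \<union> T" "d < dist x y" for x y
    unfolding U_def using that Disk d by (intro GreenD_le_ln) (auto simp: dist_norm Disk_def)
  have "0 < (1 - \<rho>\<^sup>2)\<^sup>2" using \<rho>2 by simp
  then have "(1 - \<rho>\<^sup>2)\<^sup>2 / ((1 - \<rho>\<^sup>2) / 4 * d)\<^sup>2 = 16 / d\<^sup>2"
    using d by (simp add: power_mult_distrib power_divide)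
  then have "U < L" using d by (simp add: L_def U_def divide_strict_right_mono)
  have "S \<inter> T = {}"
  proof (rule equals0I)
    fix z assume "z \<in> S \<inter> T"
    then have "d < dist z z" using sep by blast
    with d show False by simp
  qed
  show ?thesis
  proof (rule green_quad_dipole_pos[OF S(1) Disk(1) S(2) T(1) Disk(2) T(2) \<open>S \<inter> T = {}\<close>])
    show "L \<le> GreenD x y" if "x \<in> S" "y \<in> S" "y \<noteq> x" for x y
      using near diam_S that by blast
    show "L \<le> GreenD x y" if "x \<in> T" "y \<in> T" "y \<noteq> x" for x y
      using near diam_T that by blast
    show "GreenD x y \<le> U \<and> GreenD y x \<le> U" if "x \<in> S" "y \<in> T" for x y
      using far sep[OF that] that by (simp add: dist_commute)
  qed fact
qed

lemma exists_dipole_green_quad_pos: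
  assumes W: "W \<in> sets lebesgue" "W \<subseteq> Disk" "W \<notin> null_sets lebesgue"
  obtains S T where "S \<subseteq> W" "T \<subseteq> W" "S \<in> sets lebesgue" "T \<in> sets lebesgue"
    "0 < measure lebesgue S" "0 < measure lebesgue T" "0 < green_quad (dipole S T)"
proof -
  obtain \<rho> where \<rho>: "0 \<le> \<rho>" "\<rho> < 1" and inner: "W \<inter> cball 0 \<rho> \<notin> null_sets lebesgue"
    using not_null_inter_inner_cball[OF W(2,3)] by blast
  define \<kappa> where "\<kappa> = (1 - \<rho>\<^sup>2) / 8"
  have "0 < \<kappa>" using \<rho> by (simp add: \<kappa>_def abs_square_less_1)
  moreover have "1 - \<rho>\<^sup>2 \<le> 8" using zero_le_power2[of \<rho>] by linarith
  then have "\<kappa> \<le> 1" by (simp add: \<kappa>_def)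
  moreover have "W \<inter> cball 0 \<rho> \<in> sets lebesgue" "bounded (W \<inter> cball 0 \<rho>)" using W(1) by auto
  ultimately obtain d S T where d: "0 < d" and ST: "S \<subseteq> W \<inter> cball 0 \<rho>" "T \<subseteq> W \<inter> cball 0 \<rho>"
    and meas: "S \<in> sets lebesgue" "T \<in> sets lebesgue"
    and not_null: "S \<notin> null_sets lebesgue" "T \<notin> null_sets lebesgue"
    and diam_S: "\<And>x y. x \<in> S \<Longrightarrow> y \<in> S \<Longrightarrow> dist x y \<le> 2 * (\<kappa> * d)"
    and diam_T: "\<And>x y. x \<in> T \<Longrightarrow> y \<in> T \<Longrightarrow> dist x y \<le> 2 * (\<kappa> * d)"
    and sep: "\<And>x y. x \<in> S \<Longrightarrow> y \<in> T \<Longrightarrow> d < dist x y"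
    using exists_separated_pieces[OF _ _ inner] by blast
  have "S \<subseteq> Disk" "T \<subseteq> Disk" using ST W(2) by auto
  then have pos: "0 < measure lebesgue S" "0 < measure lebesgue T"
    using measure_pos_if_not_null fmeasurableI2[OF Disk_lmeasurable] meas not_null by blast+
  have diam: "2 * (\<kappa> * d) = (1 - \<rho>\<^sup>2) / 4 * d" by (simp add: \<kappa>_def)
  have "0 < green_quad (dipole S T)"
    using ST \<rho> d diam_S[unfolded diam] diam_T[unfolded diam] sep
    by (intro green_quad_dipole_pos_if_separated[OF meas(1) pos(1) meas(2) pos(2)]) auto
  with ST meas pos show ?thesis using that by blast
qed

section \<open>Level sets of maximizers\<close>

lemma Klam_add_perturbation:
  assumes w: "w \<in> Klam lam"
    and u: "u \<in> borel_measurable lebesgue" "integrable lebesgue u" "(\<integral>y. u y \<partial>lebesgue) = 0"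
    and support: "\<And>y. u y \<noteq> 0 \<Longrightarrow> y \<in> Disk \<and> \<bar>u y\<bar> \<le> w y \<and> w y + \<bar>u y\<bar> \<le> lam"
  shows "(\<lambda>x. w x + u x) \<in> Klam lam"
proof -
  have [measurable]: "w \<in> borel_measurable lebesgue"
    and bounds: "AE x in lebesgue. x \<in> Disk \<longrightarrow> 0 \<le> w x \<and> w x \<le> lam"
    and int_w: "set_integrable lebesgue Disk w" "(\<integral>x\<in>Disk. w x \<partial>lebesgue) = 1"
    using w by (auto simp: Klam_def)
  have "AE x in lebesgue. x \<in> Disk \<longrightarrow> 0 \<le> w x + u x \<and> w x + u x \<le> lam"
    using bounds
  proof eventually_elim
    case (elim x)
    show ?case
    proof (cases "u x = 0")
      case False
      then show ?thesis using support[of x] by (auto simp: abs_le_iff)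
    qed (use elim in simp)
  qed
  moreover have "indicator Disk x * u x = u x" for x
    using support[of x] by (cases "u x = 0") auto
  then have "(\<lambda>x. indicator Disk x *\<^sub>R (w x + u x)) = (\<lambda>x. indicator Disk x * w x + u x)"
    by (simp add: fun_eq_iff distrib_left)
  moreover have "integrable lebesgue (\<lambda>x. indicator Disk x * w x + u x)"
    using int_w(1) u(2) unfolding set_integrable_def by simp
  moreover have "(\<integral>x. indicator Disk x * w x + u x \<partial>lebesgue) = 1"
    using int_w u(2,3) unfolding set_integrable_def set_lebesgue_integral_def by simp
  ultimately show ?thesis
    using u(1) unfolding Klam_def set_integrable_def set_lebesgue_integral_def by simp
qed

lemma Klam_add_dipole:
  assumes w: "w \<in> Klam lam"
    and ST: "S \<subseteq> {x \<in> Disk. w x = c}" "T \<subseteq> {x \<in> Disk. w x = c}"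
      "S \<in> sets lebesgue" "T \<in> sets lebesgue" "0 < measure lebesgue S" "0 < measure lebesgue T"
    and s: "\<bar>s\<bar> * (1 / measure lebesgue S + 1 / measure lebesgue T) \<le> min c (lam - c)"
  shows "(\<lambda>x. w x + s * dipole S T x) \<in> Klam lam"
proof (rule Klam_add_perturbation[OF w])
  show "(\<lambda>x. s * dipole S T x) \<in> borel_measurable lebesgue" using ST by measurable
  have "S \<subseteq> Disk" "T \<subseteq> Disk" using ST by auto
  then show "integrable lebesgue (\<lambda>x. s * dipole S T x)" "(\<integral>x. s * dipole S T x \<partial>lebesgue) = 0"
    using dipole_integrable[of S T] integral_dipole[of S T] ST by auto
  fix y assume "s * dipole S T y \<noteq> 0"
  then have "y \<in> Disk" "w y = c" using ST dipole_outside[of y S T] by auto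
  moreover have "\<bar>s * dipole S T y\<bar> \<le> min c (lam - c)"
  proof -
    have "\<bar>s * dipole S T y\<bar> \<le> \<bar>s\<bar> * (1 / measure lebesgue S + 1 / measure lebesgue T)"
      unfolding abs_mult by (intro mult_left_mono abs_dipole_le) simp
    with s show ?thesis by linarith
  qed
  ultimately show "y \<in> Disk \<and> \<bar>s * dipole S T y\<bar> \<le> w y \<and> w y + \<bar>s * dipole S T y\<bar> \<le> lam"
    by simp
qed

lemma maximizer_interior_level_set_null:
  assumes w: "w \<in> Klam lam" and max: "\<forall>v \<in> Klam lam. Energy Om v \<le> Energy Om w"
    and c: "0 < c" "c < lam"
  shows "{x \<in> Disk. w x = c} \<in> null_sets lebesgue"
proof (rule ccontr)
  have [measurable]: "w \<in> borel_measurable lebesgue"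
    and bounds: "AE x in lebesgue. x \<in> Disk \<longrightarrow> 0 \<le> w x \<and> w x \<le> lam"
    using w by (auto simp: Klam_def)
  have "{x \<in> Disk. w x = c} \<in> sets lebesgue" by measurable
  moreover assume "{x \<in> Disk. w x = c} \<notin> null_sets lebesgue"
  ultimately obtain S T where ST: "S \<subseteq> {x \<in> Disk. w x = c}" "T \<subseteq> {x \<in> Disk. w x = c}"
      "S \<in> sets lebesgue" "T \<in> sets lebesgue" "0 < measure lebesgue S" "0 < measure lebesgue T"
    and pos: "0 < green_quad (dipole S T)"
    using exists_dipole_green_quad_pos by blast
  define M where "M = 1 / measure lebesgue S + 1 / measure lebesgue T"
  have M: "0 < M" unfolding M_def using ST(5,6) by (intro add_pos_pos) simp_all
  define t where "t = min c (lam - c) / M"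
  have t: "0 < t" "t * M = min c (lam - c)" using c M by (simp_all add: t_def)
  have "Energy Om (\<lambda>x. w x + t * dipole S T x) + Energy Om (\<lambda>x. w x - t * dipole S T x)
      = 2 * Energy Om w + t\<^sup>2 * green_quad (dipole S T)"
  proof (rule Energy_parallelogram)
    show "dipole S T \<in> borel_measurable lebesgue" using ST by measurable
    show "AE y in lebesgue. y \<in> Disk \<longrightarrow> \<bar>w y\<bar> \<le> lam"
      using bounds by eventually_elim auto
    show "AE y in lebesgue. y \<in> Disk \<longrightarrow> \<bar>dipole S T y\<bar> \<le> M"
      using abs_dipole_le by (simp add: M_def)
  qed (use c M in auto)
  moreover have "Energy Om (\<lambda>x. w x + s * dipole S T x) \<le> Energy Om w" if "\<bar>s\<bar> = t" for s
    using max Klam_add_dipole[OF w ST, of s] that t by (simp add: M_def)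
  from this[of t] this[of "- t"] have "Energy Om (\<lambda>x. w x + t * dipole S T x) \<le> Energy Om w"
    "Energy Om (\<lambda>x. w x - t * dipole S T x) \<le> Energy Om w" using t by simp_all
  ultimately have "t\<^sup>2 * green_quad (dipole S T) \<le> 0" by linarith
  with t pos show False by (simp add: mult_le_0_iff)
qed

lemma maximizer_level_set_null:
  assumes w: "w \<in> Klam lam" and max: "\<forall>v \<in> Klam lam. Energy Om v \<le> Energy Om w"
    and c: "0 < c" "c \<noteq> lam"
  shows "{x \<in> Disk. w x = c} \<in> null_sets lebesgue"
proof (cases "c < lam")
  case True
  then show ?thesis using w max c(1) by (rule maximizer_interior_level_set_null[rotated 3])
next
  case False
  with c(2) have "lam < c" by simp
  have "AE x in lebesgue. x \<in> Disk \<longrightarrow> w x \<le> lam" using w by (auto simp: Klam_def)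
  then have "AE x in lebesgue. x \<notin> {x \<in> Disk. w x = c}"
    by eventually_elim (use \<open>lam < c\<close> in auto)
  then show ?thesis by (simp add: completion.null_sets_iff_AE)
qed

theorem proposition2p4:
  fixes Om lam mu :: real and w :: "pt \<Rightarrow> real" and A B :: "pt set"
  assumes "Om > 0" and "lam > 1 / pi" and "lam \<noteq> 2 * Om"
    and "w \<in> Klam lam" and "\<forall>v \<in> Klam lam. Energy Om v \<le> Energy Om w"
    and "A = {x \<in> Disk. Gop w x + (Om / 2) * (norm x)\<^sup>2 > mu}"
    and "B = {x \<in> Disk. Gop w x + (Om / 2) * (norm x)\<^sup>2 = mu}"
    and "ereal mu = esssup (restrict_space lebesgue {x \<in> Disk. w x < lam})
                       (\<lambda>x. ereal (Gop w x + (Om / 2) * (norm x)\<^sup>2))"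
    and "AE x in lebesgue. x \<in> Disk \<longrightarrow> w x = lam * indicator A x + 2 * Om * indicator B x"
  shows "B \<in> null_sets lebesgue"
proof -
  have "{x \<in> Disk. w x = 2 * Om} \<in> null_sets lebesgue"
    using assms(1,3,4,5) by (intro maximizer_level_set_null) auto
  from AE_not_in[OF this] assms(9) have "AE x in lebesgue. x \<notin> B"
  proof eventually_elim
    case (elim x)
    show ?case
    proof
      assume "x \<in> B"
      then have "x \<in> Disk" "x \<notin> A" using assms(6,7) by auto
      with elim \<open>x \<in> B\<close> show False by simp
    qed
  qed
  then show ?thesis by (simp add: completion.null_sets_iff_AE)
qed

end
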